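(* Let $\alpha\in\mathbb N$ and $n\ge 0$. The inverse of the matrix $$\left(\frac{1}{\alpha\binom{\alpha+i+j}{\alpha}}\right)_{0\le i,j\le n}$$ has integer entries. *)

theory Defs
  imports "Jordan_Normal_Form.Matrix"
begin

definition hilb_alpha :: "nat \<Rightarrow> nat \<Rightarrow> rat mat" where
  "hilb_alpha \<alpha> n = mat (n+1) (n+1)
     (\<lambda>(i,j). 1 / (of_nat \<alpha> * of_nat ((\<alpha> + i + j) choose \<alpha>)))"

end

theory Submission
  imports Defs "HOL-Computational_Algebra.Polynomial" "Jordan_Normal_Form.Determinant"
begin

text \<open>
  Write \<open>\<alpha> = a + 1\<close>, \<open>h(j, m)\<close> for the entries of the \<open>\<alpha>\<close>-Hilbert matrix \<open>H\<close>, and let \<open>C\<close> be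
  the lower triangular integer matrix with entries \<open>c(k, j) = (-1)^j binom(k, j) binom(k + j + a, j)\<close>.
  For \<open>m \<le> k\<close>, the product \<open>binom(k + j + a, j) h(j, m)\<close> is \<open>a!/(k + a)!\<close> times
  \<open>N(j) / (j + k + a + 1)\<close> for a polynomial \<open>N\<close> of degree at most \<open>k\<close>. Alternating binomial sums
  of length \<open>k + 1\<close> kill polynomials of degree below \<open>k\<close>, so the entry \<open>(k, m)\<close> of \<open>C H\<close> is
  \<open>N(-(k + a + 1))\<close> times an explicit nonzero factor. For \<open>m < k\<close> the polynomial \<open>N\<close> vanishes
  there, so \<open>C H\<close> is upper triangular. Then \<open>C H C\<^sup>T\<close> is upper triangular and symmetric, hence
  diagonal, with entries \<open>1 / (2k + \<alpha>)\<close>. Therefore \<open>H\<^sup>-\<^sup>1 = C\<^sup>T diag(2k + \<alpha>) C\<close> is an integer matrix.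
\<close>

section \<open>Alternating binomial sums\<close>

text \<open>\<open>alt_diff k g\<close> is \<open>(-1)^k\<close> times the \<open>k\<close>-th forward difference of \<open>g\<close> at \<open>0\<close>.\<close>

definition alt_diff :: "nat \<Rightarrow> (nat \<Rightarrow> 'a :: comm_ring_1) \<Rightarrow> 'a" where
  "alt_diff k g = (\<Sum>j\<le>k. (-1)^j * of_nat (k choose j) * g j)"

lemma alt_diff_0 [simp]: "alt_diff 0 g = g 0"
  by (simp add: alt_diff_def)

lemma alt_diff_add: "alt_diff k (\<lambda>j. f j + g j) = alt_diff k f + alt_diff k g"
  by (simp add: alt_diff_def sum.distrib algebra_simps)

lemma alt_diff_diff: "alt_diff k (\<lambda>j. f j - g j) = alt_diff k f - alt_diff k g"
  by (simp add: alt_diff_def sum_subtractf algebra_simps)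

lemma alt_diff_cmult: "alt_diff k (\<lambda>j. c * f j) = c * alt_diff k f"
  by (simp add: alt_diff_def sum_distrib_left algebra_simps)

lemma alt_diff_Suc: "alt_diff (Suc k) g = alt_diff k g - alt_diff k (\<lambda>j. g (Suc j))"
proof -
  have pascal: "(-1)^Suc j * of_nat (Suc k choose Suc j) * g (Suc j) =
      (-1)^Suc j * of_nat (k choose Suc j) * g (Suc j) - (-1)^j * of_nat (k choose j) * g (Suc j)"
    for j by (simp add: algebra_simps)
  have "alt_diff k g = (\<Sum>j\<le>Suc k. (-1)^j * of_nat (k choose j) * g j)"
    unfolding alt_diff_def by (simp add: binomial_eq_0)
  also have "\<dots> = g 0 + (\<Sum>j\<le>k. (-1)^Suc j * of_nat (k choose Suc j) * g (Suc j))"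
    by (subst sum.atMost_Suc_shift) simp
  finally have shift: "alt_diff k g = \<dots>" .
  have "alt_diff (Suc k) g = g 0 + (\<Sum>j\<le>k. (-1)^Suc j * of_nat (Suc k choose Suc j) * g (Suc j))"
    unfolding alt_diff_def by (subst sum.atMost_Suc_shift) simp
  also have "\<dots> = g 0 + (\<Sum>j\<le>k. (-1)^Suc j * of_nat (k choose Suc j) * g (Suc j))
      - alt_diff k (\<lambda>j. g (Suc j))"
    unfolding pascal sum_subtractf alt_diff_def by simp
  finally show ?thesis
    unfolding shift .
qed

lemma degree_diff_pcompose_shift_less:
  fixes p :: "'a::idom poly"
  assumes "degree p > 0"
  shows "degree (p - p \<circ>\<^sub>p [:1, 1:]) < degree p"
proof -
  have "coeff (p - p \<circ>\<^sub>p [:1, 1:]) i = 0" if "degree p - 1 < i" for i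
  proof (cases "i = degree p")
    case True
    then show ?thesis
      using lead_coeff_comp[of "[:1, 1:]" p] by (simp add: degree_pcompose)
  next
    case False
    with that show ?thesis by (simp add: degree_pcompose coeff_eq_0)
  qed
  then have "degree (p - p \<circ>\<^sub>p [:1, 1:]) \<le> degree p - 1"
    by (intro degree_le) auto
  with assms show ?thesis by simp
qed

lemma alt_diff_poly:
  fixes p :: "'a::idom poly"
  assumes "degree p < k"
  shows "alt_diff k (\<lambda>j. poly p (of_nat j)) = 0"
  using assms
proof (induction k arbitrary: p)
  case 0
  then show ?case by simp
next
  case (Suc k)
  let ?q = "p - p \<circ>\<^sub>p [:1, 1:]"
  have "alt_diff (Suc k) (\<lambda>j. poly p (of_nat j)) = alt_diff k (\<lambda>j. poly ?q (of_nat j))"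
    by (simp add: alt_diff_Suc alt_diff_diff poly_pcompose algebra_simps)
  also have "\<dots> = 0"
  proof (cases "degree p = 0")
    case True
    then have "?q = 0" by (auto elim: degree_eq_zeroE)
    then show ?thesis by (simp add: alt_diff_def)
  next
    case False
    then show ?thesis
      using Suc.prems degree_diff_pcompose_shift_less[of p] by (intro Suc.IH) simp
  qed
  finally show ?case .
qed

lemma alt_diff_inverse:
  fixes x :: "'a::linordered_field"
  assumes "x > 0"
  shows "alt_diff k (\<lambda>j. 1 / (x + of_nat j)) = fact k / pochhammer x (Suc k)"
  using assms
proof (induction k arbitrary: x)
  case 0
  then show ?case by simp
next
  case (Suc k)
  have "alt_diff k (\<lambda>j. 1 / (x + of_nat (Suc j))) = fact k / pochhammer (x + 1) (Suc k)"
    using Suc.IH[of "x + 1"] Suc.prems by (simp add: add_ac)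
  then have "alt_diff (Suc k) (\<lambda>j. 1 / (x + of_nat j))
      = fact k / pochhammer x (Suc k) - fact k / pochhammer (x + 1) (Suc k)"
    using Suc by (simp add: alt_diff_Suc)
  also have "\<dots> = fact (Suc k) / pochhammer x (Suc (Suc k))"
  proof -
    let ?P = "pochhammer x (Suc k)" and ?Q = "pochhammer (x + 1) (Suc k)"
    have PQ: "?P * (x + of_nat (Suc k)) = x * ?Q"
      by (metis pochhammer_Suc pochhammer_rec)
    have pos: "?P > 0" "?Q > 0" "x + of_nat (Suc k) > 0"
      using Suc.prems by (simp_all add: pochhammer_pos add_pos_nonneg)
    have "fact k / ?P = fact k * (x + of_nat (Suc k)) / (x * ?Q)"
      unfolding PQ[symmetric] using pos by simp
    moreover have "fact k / ?Q = fact k * x / (x * ?Q)"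
      using Suc.prems by simp
    ultimately have "fact k / ?P - fact k / ?Q
        = fact k * (x + of_nat (Suc k)) / (x * ?Q) - fact k * x / (x * ?Q)"
      by simp
    also have "\<dots> = fact k * of_nat (Suc k) / (x * ?Q)"
      unfolding diff_divide_distrib[symmetric] by (simp add: algebra_simps)
    also have "\<dots> = fact (Suc k) / pochhammer x (Suc (Suc k))"
      by (simp add: pochhammer_rec mult.commute)
    finally show ?thesis .
  qed
  finally show ?case .
qed

lemma alt_diff_poly_div:
  fixes N :: "'a::linordered_field poly"
  assumes "degree N \<le> k" and "x > 0"
  shows "alt_diff k (\<lambda>j. poly N (of_nat j) / (x + of_nat j))
    = poly N (- x) * fact k / pochhammer x (Suc k)"
proof -
  define q where "q = synthetic_div N (- x)"
  define r where "r = poly N (- x)"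
  have N_eq: "poly N y = (x + y) * poly q y + r" for y
  proof -
    have "poly N y = poly ([:x, 1:] * q + [:r:]) y"
      unfolding q_def r_def by (subst (1) synthetic_div_correct'[of "- x" N, symmetric]) simp
    then show ?thesis by (simp add: algebra_simps)
  qed
  have "poly N (of_nat j) / (x + of_nat j) = poly q (of_nat j) + r * (1 / (x + of_nat j))" for j
  proof -
    have "x + of_nat j > 0"
      using assms(2) by (simp add: add_pos_nonneg)
    then have "x + of_nat j \<noteq> 0" by simp
    then show ?thesis by (simp add: N_eq field_simps)
  qed
  then have "alt_diff k (\<lambda>j. poly N (of_nat j) / (x + of_nat j))
      = alt_diff k (\<lambda>j. poly q (of_nat j) + r * (1 / (x + of_nat j)))"
    by simp
  also have "\<dots> = alt_diff k (\<lambda>j. poly q (of_nat j))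
      + r * alt_diff k (\<lambda>j. 1 / (x + of_nat j))"
    by (simp only: alt_diff_add alt_diff_cmult)
  also have "alt_diff k (\<lambda>j. poly q (of_nat j)) = 0"
  proof (cases "k = 0")
    case True
    with assms(1) have "q = 0"
      unfolding q_def by (auto elim: degree_eq_zeroE)
    then show ?thesis by (simp add: alt_diff_def)
  next
    case False
    with assms(1) show ?thesis
      unfolding q_def by (intro alt_diff_poly) (simp add: degree_synthetic_div)
  qed
  finally show ?thesis
    using alt_diff_inverse[OF assms(2)] by (simp add: r_def)
qed

section \<open>The rows of \<open>C H\<close>\<close>

lemma poly_pochhammer: "poly (pochhammer p n) x = pochhammer (poly p x) n"
  by (simp add: pochhammer_prod poly_prod)

lemma degree_pochhammer_linear_le: "degree (pochhammer [:c, 1:] n) \<le> n"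
proof (induction n)
  case 0
  then show ?case by simp
next
  case (Suc n)
  have "degree (pochhammer [:c, 1:] (Suc n)) \<le> degree (pochhammer [:c, 1:] n) + degree ([:c, 1:] + of_nat n)"
    unfolding pochhammer_Suc by (rule degree_mult_le)
  also have "degree ([:c, 1:] + of_nat n :: 'a poly) \<le> 1"
    by (simp add: of_nat_poly degree_add_le)
  finally show ?case using Suc.IH by simp
qed

lemma fact_add_eq_fact_mult_pochhammer:
  "fact (n + m) = (fact n * pochhammer (of_nat n + 1) m :: 'a::{semiring_char_0, comm_semiring_1})"
  unfolding pochhammer_fact pochhammer_product' by (simp add: add.commute)

definition hilb_entry :: "nat \<Rightarrow> nat \<Rightarrow> nat \<Rightarrow> rat" where
  "hilb_entry \<alpha> i j = 1 / (of_nat \<alpha> * of_nat ((\<alpha> + i + j) choose \<alpha>))"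

text \<open>Here and below \<open>a = \<alpha> - 1\<close>, so that \<open>\<alpha> = Suc a\<close> avoids truncated subtraction.\<close>

definition diagonalizer_entry :: "nat \<Rightarrow> nat \<Rightarrow> nat \<Rightarrow> rat" where
  "diagonalizer_entry a k j = (-1)^j * of_nat (k choose j) * of_nat ((k + j + a) choose j)"

definition row_numerator :: "nat \<Rightarrow> nat \<Rightarrow> nat \<Rightarrow> rat poly" where
  "row_numerator a k m = pochhammer [:1, 1:] m * pochhammer [:of_nat (m + a + 2), 1:] (k - m)"

lemma degree_row_numerator: "m \<le> k \<Longrightarrow> degree (row_numerator a k m) \<le> k"
  unfolding row_numerator_def
  by (rule order.trans[OF degree_mult_le])
    (use degree_pochhammer_linear_le[of "1 :: rat" m]
      degree_pochhammer_linear_le[of "of_nat (m + a + 2) :: rat" "k - m"] in linarith)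

lemma poly_row_numerator:
  "poly (row_numerator a k m) x = pochhammer (x + 1) m * pochhammer (x + of_nat (m + a + 2)) (k - m)"
  by (simp add: row_numerator_def poly_pochhammer add.commute)

lemma binom_mult_hilb_entry:
  assumes "m \<le> k"
  shows "of_nat ((k + j + a) choose j) * hilb_entry (Suc a) j m
    = fact a / fact (k + a) * (poly (row_numerator a k m) (of_nat j) / (of_nat (k + a + 1) + of_nat j))"
proof -
  have hilb: "hilb_entry (Suc a) j m = fact a * fact (j + m) / fact (j + m + a + 1)"
  proof -
    have "of_nat ((Suc a + j + m) choose Suc a) = (fact (Suc a + j + m) / (fact (Suc a) * fact (j + m)) :: rat)"
      by (subst binomial_fact) (auto simp: add_ac)
    then show ?thesis
      by (simp add: hilb_entry_def add_ac)
  qed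
  have binom: "of_nat ((k + j + a) choose j) = (fact (k + j + a) / (fact j * fact (k + a)) :: rat)"
    by (simp add: binomial_fact add_ac)
  have P1: "pochhammer (of_nat j + 1) m = (fact (j + m) / fact j :: rat)"
    using fact_add_eq_fact_mult_pochhammer[of j m, where 'a = rat] by simp
  have "fact (j + m + a + 1 + (k - m))
      = fact (j + m + a + 1) * (pochhammer (of_nat (j + m + a + 1) + 1) (k - m) :: rat)"
    by (rule fact_add_eq_fact_mult_pochhammer)
  then have P2: "pochhammer (of_nat j + of_nat (m + a + 2)) (k - m)
      = (fact (j + k + a + 1) / fact (j + m + a + 1) :: rat)"
    using assms by (simp add: add_ac)
  have S: "fact (j + k + a + 1) = (of_nat (k + a + 1) + of_nat j) * (fact (k + j + a) :: rat)"
    by (simp add: add_ac)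
  have "(of_nat (k + a + 1) + of_nat j :: rat) \<noteq> 0"
    by (metis of_nat_add of_nat_eq_0_iff add_is_0 zero_neq_one add.commute)
  then show ?thesis
    unfolding hilb binom poly_row_numerator P1 P2 S
    by (simp only: divide_inverse inverse_mult_distrib mult_ac) (simp add: field_simps del: fact_Suc)
qed

lemma diagonalizer_row_sum:
  assumes "m \<le> k"
  shows "(\<Sum>j\<le>k. diagonalizer_entry a k j * hilb_entry (Suc a) j m)
    = fact a / fact (k + a) * (poly (row_numerator a k m) (- of_nat (k + a + 1)) * fact k
        / pochhammer (of_nat (k + a + 1)) (Suc k))"
proof -
  have "(\<Sum>j\<le>k. diagonalizer_entry a k j * hilb_entry (Suc a) j m)
      = (\<Sum>j\<le>k. (-1)^j * of_nat (k choose j) * (of_nat ((k + j + a) choose j) * hilb_entry (Suc a) j m))"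
    unfolding diagonalizer_entry_def by (simp add: mult.assoc)
  also have "\<dots> = fact a / fact (k + a)
      * alt_diff k (\<lambda>j. poly (row_numerator a k m) (of_nat j) / (of_nat (k + a + 1) + of_nat j))"
    unfolding binom_mult_hilb_entry[OF assms] alt_diff_def by (simp add: sum_distrib_left algebra_simps)
  also have "\<dots> = fact a / fact (k + a) * (poly (row_numerator a k m) (- of_nat (k + a + 1)) * fact k
        / pochhammer (of_nat (k + a + 1)) (Suc k))"
    using degree_row_numerator[OF assms] by (subst alt_diff_poly_div) auto
  finally show ?thesis .
qed

lemma diagonalizer_row_sum_below:
  assumes "m < k"
  shows "(\<Sum>j\<le>k. diagonalizer_entry a k j * hilb_entry (Suc a) j m) = 0"
proof -
  have shift: "- of_nat (k + a + 1) + of_nat (m + a + 2) = (- of_nat (k - m - 1) :: rat)"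
    using assms by (simp add: of_nat_diff)
  have "pochhammer (- of_nat (k - m - 1) :: rat) (k - m) = 0"
    by (rule pochhammer_of_nat_eq_0_lemma) (use assms in simp)
  then have "poly (row_numerator a k m) (- of_nat (k + a + 1)) = 0"
    unfolding poly_row_numerator shift by simp
  then show ?thesis
    using assms by (simp add: diagonalizer_row_sum)
qed

lemma diagonalizer_row_sum_diag:
  "diagonalizer_entry a k k * (\<Sum>j\<le>k. diagonalizer_entry a k j * hilb_entry (Suc a) j k)
    = 1 / of_nat (2 * k + a + 1)"
proof -
  have "poly (row_numerator a k k) (- of_nat (k + a + 1)) = pochhammer (- of_nat (k + a)) k"
    by (simp add: poly_row_numerator)
  also have "\<dots> = (-1)^k * pochhammer (of_nat a + 1) k"
    unfolding pochhammer_minus by simp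
  also have "\<dots> = (-1)^k * (fact (k + a) / fact a)"
    using fact_add_eq_fact_mult_pochhammer[of a k, where 'a = rat] by (simp add: add.commute)
  finally have numer: "poly (row_numerator a k k) (- of_nat (k + a + 1)) = \<dots>" .
  have "k + a + Suc k = 2 * k + a + 1" by simp
  then have "fact (2 * k + a + 1) = fact (k + a) * (pochhammer (of_nat (k + a) + 1) (Suc k) :: rat)"
    using fact_add_eq_fact_mult_pochhammer[of "k + a" "Suc k", where 'a = rat] by metis
  then have denom: "pochhammer (of_nat (k + a + 1)) (Suc k) = (fact (2 * k + a + 1) / fact (k + a) :: rat)"
    by (simp add: ac_simps del: fact_Suc)
  have row: "(\<Sum>j\<le>k. diagonalizer_entry a k j * hilb_entry (Suc a) j k)
      = (-1)^k * (fact k * fact (k + a) / fact (2 * k + a + 1))"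
    unfolding diagonalizer_row_sum[OF order.refl] numer denom
    by (simp add: field_simps del: fact_Suc)
  have diag: "diagonalizer_entry a k k = (-1)^k * (fact (2 * k + a) / (fact k * fact (k + a)))"
    unfolding diagonalizer_entry_def by (subst binomial_fact) (auto simp: mult_2 add_ac)
  define s :: rat where "s = of_nat (2 * k + a + 1)"
  have "s \<noteq> 0"
    unfolding s_def by (simp only: of_nat_eq_0_iff)
  have fact_Suc_diag: "fact (2 * k + a + 1) = s * fact (2 * k + a)"
    unfolding s_def by simp
  show ?thesis
    unfolding s_def[symmetric] row diag fact_Suc_diag
    using \<open>s \<noteq> 0\<close> by (simp add: field_simps del: fact_Suc)
qed

section \<open>Triangular matrices\<close>

lemma upper_triangular_mult_entry:
  assumes "A \<in> carrier_mat n n" "B \<in> carrier_mat n n" "upper_triangular A" "upper_triangular B"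
    and "j \<le> i" "i < n"
  shows "(A * B) $$ (i, j) = (if i = j then A $$ (i, i) * B $$ (i, i) else 0)"
proof -
  have "A $$ (i, l) * B $$ (l, j) = (if l = i \<and> i = j then A $$ (i, i) * B $$ (i, i) else 0)"
    if "l < n" for l
  proof (cases "l < i")
    case True
    then show ?thesis
      using assms upper_triangularD[OF assms(3) True] by auto
  next
    case False
    then show ?thesis
      using assms that upper_triangularD[OF assms(4), of j l] by auto
  qed
  then have "(A * B) $$ (i, j)
      = (\<Sum>l\<in>{0..<n}. if l = i \<and> i = j then A $$ (i, i) * B $$ (i, i) else 0)"
    using assms by (simp add: scalar_prod_def)
  then show ?thesis
    using assms(6) by simp
qed

lemma upper_triangular_mult:
  assumes "A \<in> carrier_mat n n" "B \<in> carrier_mat n n" "upper_triangular A" "upper_triangular B"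
  shows "upper_triangular (A * B)"
  using assms upper_triangular_mult_entry[OF assms] by (intro upper_triangularI) auto

lemma upper_triangular_symmetric_eq_mat_diag:
  assumes "A \<in> carrier_mat n n" "upper_triangular A" "transpose_mat A = A"
  shows "A = mat_diag n (\<lambda>i. A $$ (i, i))"
proof (rule eq_matI)
  fix i j
  assume "i < dim_row (mat_diag n (\<lambda>i. A $$ (i, i)))" "j < dim_col (mat_diag n (\<lambda>i. A $$ (i, i)))"
  then have ij: "i < n" "j < n" by (auto simp: mat_diag_def)
  have "A $$ (i, j) = 0" if "i \<noteq> j"
  proof (cases "j < i")
    case True
    then show ?thesis using assms ij by auto
  next
    case False
    with that have "A $$ (j, i) = 0" using assms ij by auto
    moreover have "A $$ (i, j) = A $$ (j, i)"
      using assms ij by (metis index_transpose_mat(1) carrier_matD)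
    ultimately show ?thesis by simp
  qed
  then show "A $$ (i, j) = mat_diag n (\<lambda>i. A $$ (i, i)) $$ (i, j)"
    using ij by (auto simp: mat_diag_def)
qed (use assms in \<open>auto simp: mat_diag_def\<close>)

lemma transpose_congruence:
  fixes C H :: "'a::comm_semiring_0 mat"
  assumes "C \<in> carrier_mat m n" "H \<in> carrier_mat n n" "transpose_mat H = H"
  shows "transpose_mat (C * H * transpose_mat C) = C * H * transpose_mat C"
proof -
  have "transpose_mat (C * H * transpose_mat C) = C * transpose_mat (C * H)"
    using assms by (subst transpose_mult[of "C * H" m n "transpose_mat C" m]) auto
  also have "\<dots> = C * (H * transpose_mat C)"
    using assms by (simp add: transpose_mult[of C m n H n])
  also have "\<dots> = C * H * transpose_mat C"
    using assms by (intro assoc_mult_mat[symmetric, of _ m n _ n _ m]) auto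
  finally show ?thesis .
qed

lemma mult_eq_one_imp_inverse:
  fixes A C E :: "'a::field mat"
  assumes "C \<in> carrier_mat n n" "A \<in> carrier_mat n n" "E \<in> carrier_mat n n"
    and "C * A * E = 1\<^sub>m n"
  shows "A * (E * C) = 1\<^sub>m n" "E * C * A = 1\<^sub>m n"
proof -
  have "C * (A * E) = 1\<^sub>m n"
    using assms assoc_mult_mat[of C n n A n E n] by simp
  then have "A * E * C = 1\<^sub>m n"
    using assms by (intro mat_mult_left_right_inverse[of C n]) auto
  then show AEC: "A * (E * C) = 1\<^sub>m n"
    using assms assoc_mult_mat[of A n n E n C n] by simp
  show "E * C * A = 1\<^sub>m n"
    using assms AEC by (intro mat_mult_left_right_inverse[of A n]) auto
qed

lemma mult_mat_Ints:
  fixes A B :: "'a::ring_1 mat"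
  assumes "A \<in> carrier_mat nr n" "B \<in> carrier_mat n nc"
    and "\<forall>i<nr. \<forall>j<n. A $$ (i, j) \<in> \<int>" "\<forall>i<n. \<forall>j<nc. B $$ (i, j) \<in> \<int>"
  shows "\<forall>i<nr. \<forall>j<nc. (A * B) $$ (i, j) \<in> \<int>"
  using assms by (auto simp: scalar_prod_def intro!: Ints_mult)

section \<open>The inverse of the \<open>\<alpha>\<close>-Hilbert matrix\<close>

definition diagonalizer :: "nat \<Rightarrow> nat \<Rightarrow> rat mat" where
  "diagonalizer a n = mat (n + 1) (n + 1) (\<lambda>(k, j). diagonalizer_entry a k j)"

lemma diagonalizer_carrier: "diagonalizer a n \<in> carrier_mat (n + 1) (n + 1)"
  by (simp add: diagonalizer_def)

lemma diagonalizer_Ints: "\<forall>i<n + 1. \<forall>j<n + 1. diagonalizer a n $$ (i, j) \<in> \<int>"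
  by (simp add: diagonalizer_def diagonalizer_entry_def)

lemma hilb_alpha_carrier: "hilb_alpha \<alpha> n \<in> carrier_mat (n + 1) (n + 1)"
  by (simp add: hilb_alpha_def)

lemma transpose_hilb_alpha: "transpose_mat (hilb_alpha \<alpha> n) = hilb_alpha \<alpha> n"
  by (rule eq_matI) (auto simp: hilb_alpha_def add_ac)

lemma upper_triangular_transpose_diagonalizer: "upper_triangular (transpose_mat (diagonalizer a n))"
  by (intro upper_triangularI) (simp add: diagonalizer_def diagonalizer_entry_def binomial_eq_0)

lemma diagonalizer_mult_hilb_alpha_entry:
  assumes "k < n + 1" "m < n + 1"
  shows "(diagonalizer a n * hilb_alpha (Suc a) n) $$ (k, m)
    = (\<Sum>j\<le>k. diagonalizer_entry a k j * hilb_entry (Suc a) j m)"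
proof -
  have "(diagonalizer a n * hilb_alpha (Suc a) n) $$ (k, m)
      = (\<Sum>j\<in>{0..<n + 1}. diagonalizer_entry a k j * hilb_entry (Suc a) j m)"
    using assms by (simp add: scalar_prod_def diagonalizer_def hilb_alpha_def hilb_entry_def)
  also have "\<dots> = (\<Sum>j\<le>k. diagonalizer_entry a k j * hilb_entry (Suc a) j m)"
    using assms by (intro sum.mono_neutral_right) (auto simp: diagonalizer_entry_def binomial_eq_0)
  finally show ?thesis .
qed

lemma upper_triangular_diagonalizer_mult_hilb_alpha:
  "upper_triangular (diagonalizer a n * hilb_alpha (Suc a) n)"
proof (rule upper_triangularI)
  fix k m assume "m < k" "k < dim_row (diagonalizer a n * hilb_alpha (Suc a) n)"
  moreover have "dim_row (diagonalizer a n) = n + 1"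
    by (simp add: diagonalizer_def)
  ultimately show "(diagonalizer a n * hilb_alpha (Suc a) n) $$ (k, m) = 0"
    by (simp add: diagonalizer_mult_hilb_alpha_entry diagonalizer_row_sum_below)
qed

lemma diagonalizer_congruence:
  "diagonalizer a n * hilb_alpha (Suc a) n * transpose_mat (diagonalizer a n)
    = mat_diag (n + 1) (\<lambda>k. 1 / of_nat (2 * k + a + 1))"
proof -
  let ?C = "diagonalizer a n" and ?H = "hilb_alpha (Suc a) n"
  let ?M = "?C * ?H * transpose_mat ?C"
  note carriers = diagonalizer_carrier[of a n] hilb_alpha_carrier[of "Suc a" n]
  have M: "?M \<in> carrier_mat (n + 1) (n + 1)"
    using carriers by simp
  have sym: "transpose_mat ?M = ?M"
    using carriers transpose_hilb_alpha by (rule transpose_congruence)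
  have upper: "upper_triangular ?M"
    by (rule upper_triangular_mult[of _ "n + 1"])
      (use carriers in \<open>simp_all add: upper_triangular_diagonalizer_mult_hilb_alpha
        upper_triangular_transpose_diagonalizer\<close>)
  have diag: "?M $$ (k, k) = 1 / of_nat (2 * k + a + 1)" if "k < n + 1" for k
  proof -
    have "?M $$ (k, k) = (?C * ?H) $$ (k, k) * transpose_mat ?C $$ (k, k)"
      using carriers that upper_triangular_mult_entry[of "?C * ?H" "n + 1" "transpose_mat ?C" k k]
      by (simp add: upper_triangular_diagonalizer_mult_hilb_alpha upper_triangular_transpose_diagonalizer)
    also have "\<dots> = diagonalizer_entry a k k
        * (\<Sum>j\<le>k. diagonalizer_entry a k j * hilb_entry (Suc a) j k)"
      unfolding diagonalizer_mult_hilb_alpha_entry[OF that that]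
      using that by (simp add: diagonalizer_def mult.commute)
    finally show ?thesis
      by (simp only: diagonalizer_row_sum_diag)
  qed
  have "?M = mat_diag (n + 1) (\<lambda>k. ?M $$ (k, k))"
    by (rule upper_triangular_symmetric_eq_mat_diag[OF M upper sym])
  also have "\<dots> = mat_diag (n + 1) (\<lambda>k. 1 / of_nat (2 * k + a + 1))"
    by (rule eq_matI) (auto simp: mat_diag_def diag)
  finally show ?thesis .
qed

definition hilb_alpha_inv :: "nat \<Rightarrow> nat \<Rightarrow> rat mat" where
  "hilb_alpha_inv a n = transpose_mat (diagonalizer a n)
     * mat_diag (n + 1) (\<lambda>k. of_nat (2 * k + a + 1)) * diagonalizer a n"

lemma hilb_alpha_inv_carrier: "hilb_alpha_inv a n \<in> carrier_mat (n + 1) (n + 1)"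
  unfolding hilb_alpha_inv_def using diagonalizer_carrier[of a n]
  by (intro mult_carrier_mat[of _ "n + 1" "n + 1"]) auto

lemma hilb_alpha_inv_Ints: "\<forall>i<n + 1. \<forall>j<n + 1. hilb_alpha_inv a n $$ (i, j) \<in> \<int>"
  unfolding hilb_alpha_inv_def using diagonalizer_carrier[of a n] diagonalizer_Ints[of n a]
  by (intro mult_mat_Ints[of _ "n + 1" "n + 1"]) (auto simp: mat_diag_def)

lemma hilb_alpha_inv_is_inverse:
  "hilb_alpha (Suc a) n * hilb_alpha_inv a n = 1\<^sub>m (n + 1)"
  "hilb_alpha_inv a n * hilb_alpha (Suc a) n = 1\<^sub>m (n + 1)"
proof -
  let ?C = "diagonalizer a n" and ?H = "hilb_alpha (Suc a) n"
  let ?D = "mat_diag (n + 1) (\<lambda>k. of_nat (2 * k + a + 1) :: rat)"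
  note carriers = diagonalizer_carrier[of a n] hilb_alpha_carrier[of "Suc a" n] mat_diag_dim[of "n + 1"]
  have "(\<lambda>k. 1 / of_nat (2 * k + a + 1) * of_nat (2 * k + a + 1)) = (\<lambda>k. 1 :: rat)"
    by (intro ext) (simp del: of_nat_add of_nat_Suc)
  then have "?C * ?H * transpose_mat ?C * ?D = 1\<^sub>m (n + 1)"
    unfolding diagonalizer_congruence mat_diag_diag by simp
  moreover have "?C * ?H * (transpose_mat ?C * ?D) = ?C * ?H * transpose_mat ?C * ?D"
    using carriers by (intro assoc_mult_mat[symmetric, of _ "n + 1" "n + 1" _ "n + 1" _ "n + 1"]) auto
  ultimately show "?H * hilb_alpha_inv a n = 1\<^sub>m (n + 1)" "hilb_alpha_inv a n * ?H = 1\<^sub>m (n + 1)"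
    unfolding hilb_alpha_inv_def using carriers by (intro mult_eq_one_imp_inverse[of ?C "n + 1"]; simp)+
qed

theorem theorem4p2:
  fixes \<alpha> n :: nat
  assumes "\<alpha> \<ge> 1"
  shows "\<exists>B \<in> carrier_mat (n+1) (n+1).
           inverts_mat (hilb_alpha \<alpha> n) B \<and> inverts_mat B (hilb_alpha \<alpha> n) \<and>
           (\<forall>i < n+1. \<forall>j < n+1. B $$ (i,j) \<in> \<int>)"
proof -
  obtain a where a: "\<alpha> = Suc a"
    using assms by (cases \<alpha>) auto
  show ?thesis
    using hilb_alpha_inv_is_inverse[of a n] hilb_alpha_carrier[of \<alpha> n]
      hilb_alpha_inv_carrier[of a n] hilb_alpha_inv_Ints[of n a]
    unfolding a inverts_mat_def by (intro bexI[of _ "hilb_alpha_inv a n"]) auto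
qed

end
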